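(* Let $e\ge4$ and let $Q$ be a convex polygon with $e-1$ vertices, one of which is marked as distinguished, the remaining vertices being numbered $2,3,\dots,e-1$ in cyclic order starting next to the distinguished vertex. To a triangulation $\mathcal T$ of $Q$ (a subdivision into triangles by non-crossing diagonals) associate the colouring of $\triangle_{2,e-1}$ in which a dot $(\delta,\varepsilon)$ is black if and only if the vertices $\delta$ and $\varepsilon$ are joined by a diagonal of $\mathcal T$. This assignment is a bijection between the set of triangulations of $Q$ and the set of sparse colourings of $\triangle_{2,e-1}$.
   Context: Dots are pairs of integers $(\alpha,\beta)$. For integers $\delta<\varepsilon$, the triangle $\triangle_{\delta,\varepsilon}$ is the set of dots $(\alpha,\beta)$ with $\delta\le\alpha$, $\beta\le\varepsilon$ and $\beta-\alpha\ge 2$. For a dot $(\alpha,\beta)\in\triangle_{\delta,\varepsilon}$, the sub-triangle $\triangle_{\alpha,\beta}$ is defined by the same rule. A coloured triangle $\triangle_{\delta,\varepsilon}$ is sparse if for every dot $(\alpha,\beta)\in\triangle_{\delta,\varepsilon}$ (including the vertex) the number of black dots in $\triangle_{\alpha,\beta}$ is at most $\beta-\alpha-1$, with equality if and only if $(\alpha,\beta)$ is black. *)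

theory Defs
  imports Main
begin

definition tri :: "int \<Rightarrow> int \<Rightarrow> (int \<times> int) set" where
  "tri \<delta> \<epsilon> = {(\<alpha>, \<beta>). \<delta> \<le> \<alpha> \<and> \<beta> \<le> \<epsilon> \<and> \<beta> - \<alpha> \<ge> 2}"

text \<open>A colouring of a triangle is given by its set B of black dots (B is a subset of the triangle).
  Sparseness of the coloured triangle.\<close>
definition sparse :: "int \<Rightarrow> int \<Rightarrow> (int \<times> int) set \<Rightarrow> bool" where
  "sparse \<delta> \<epsilon> B \<longleftrightarrow>
     (\<forall>(\<alpha>, \<beta>) \<in> tri \<delta> \<epsilon>.
        int (card (B \<inter> tri \<alpha> \<beta>)) \<le> \<beta> - \<alpha> - 1 \<and>
        (int (card (B \<inter> tri \<alpha> \<beta>)) = \<beta> - \<alpha> - 1 \<longleftrightarrow> (\<alpha>, \<beta>) \<in> B))"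

definition sparse_colourings :: "int \<Rightarrow> int \<Rightarrow> (int \<times> int) set set" where
  "sparse_colourings \<delta> \<epsilon> = {B. B \<subseteq> tri \<delta> \<epsilon> \<and> sparse \<delta> \<epsilon> B}"

text \<open>Convex polygon with n vertices labelled 1..n in cyclic order (vertex 1 distinguished).
  A diagonal joining vertices i < j is encoded as the pair (i, j).\<close>
definition diagonals :: "int \<Rightarrow> (int \<times> int) set" where
  "diagonals n = {(i, j). 1 \<le> i \<and> j \<le> n \<and> j - i \<ge> 2 \<and> \<not> (i = 1 \<and> j = n)}"

text \<open>Two diagonals of a convex polygon cross (in their interiors) iff their endpoints interleave.\<close>
definition crosses :: "int \<times> int \<Rightarrow> int \<times> int \<Rightarrow> bool" where
  "crosses p q \<longleftrightarrow> (case p of (a, b) \<Rightarrow> case q of (c, d) \<Rightarrow>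
       (a < c \<and> c < b \<and> b < d) \<or> (c < a \<and> a < d \<and> d < b))"

definition noncrossing :: "int \<Rightarrow> (int \<times> int) set \<Rightarrow> bool" where
  "noncrossing n T \<longleftrightarrow> T \<subseteq> diagonals n \<and> (\<forall>p\<in>T. \<forall>q\<in>T. \<not> crosses p q)"

text \<open>A triangulation (subdivision into triangles by non-crossing diagonals) of the convex
  n-gon is identified with its set of diagonals: a maximal set of pairwise non-crossing diagonals.\<close>
definition triangulation :: "int \<Rightarrow> (int \<times> int) set \<Rightarrow> bool" where
  "triangulation n T \<longleftrightarrow> noncrossing n T \<and> (\<forall>S. noncrossing n S \<and> T \<subseteq> S \<longrightarrow> S = T)"

definition triangulations :: "int \<Rightarrow> (int \<times> int) set set" where
  "triangulations n = {T. triangulation n T}"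

end

theory Submission
  imports Defs
begin

(* A set of dots is read as a set of chords, a dot (a,b) being the chord from vertex a to
   vertex b.  The counting heart of the proof is a pair of bounds for a pairwise non-crossing
   set S of chords inside the sub-polygon a..b:
     - upper bound: S has at most b-a-1 chords in tri a b, and at most b-a-2 if (a,b) is
       missing (card_noncrossing_le, card_noncrossing_less);
     - lower bound: if (a,b) belongs to S and S is saturated in tri a b (every compatible chord
       is already present) then S has at least b-a-1 chords there (card_saturated_ge).
   Both are proved by induction on b-a, splitting the sub-polygon at the apex k of the
   triangle resting on the side (a,b) (side_apex).  Together they show that the colouring
   of a triangulation is sparse.  Conversely a sparse colouring is non-crossing, and it extends
   in exactly one way to a triangulation: add all chords (1,j) not straddled by a black dot
   (fan_completion).  Chords at vertex 1 are forced by the others, which gives injectivity. *)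

lemma crosses_pair [simp]:
  "crosses (a, b) (c, d) \<longleftrightarrow> (a < c \<and> c < b \<and> b < d) \<or> (c < a \<and> a < d \<and> d < b)"
  by (simp add: crosses_def)

lemma crosses_commute: "crosses p q \<longleftrightarrow> crosses q p"
  by (cases p; cases q) auto

lemma not_crosses_self: "\<not> crosses p p"
  by (cases p) auto

lemma mem_tri [simp]: "(x, y) \<in> tri a b \<longleftrightarrow> a \<le> x \<and> y \<le> b \<and> y - x \<ge> 2"
  by (simp add: tri_def)

lemma tri_empty: "b - a < 2 \<Longrightarrow> tri a b = {}"
  by (auto simp: tri_def)

lemma finite_tri: "finite (tri a b)"
  by (rule finite_subset[of _ "{a..b} \<times> {a..b}"]) (auto simp: tri_def)

lemma tri_mono: "(\<alpha>, \<beta>) \<in> tri \<delta> \<epsilon> \<Longrightarrow> tri \<alpha> \<beta> \<subseteq> tri \<delta> \<epsilon>"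
  by (auto simp: tri_def)

lemma tri_subset_diagonals: "tri 2 n \<subseteq> diagonals n"
  by (auto simp: tri_def diagonals_def)

lemma card_le_card_Diff_singleton: "finite A \<Longrightarrow> card A \<le> card (A - {x}) + 1"
  by (cases "x \<in> A") (auto simp: card_Diff_singleton_if card_gt_0_iff)

section \<open>Non-crossing sets of chords\<close>

definition pairwise_noncrossing :: "(int \<times> int) set \<Rightarrow> bool" where
  "pairwise_noncrossing S \<longleftrightarrow> (\<forall>p\<in>S. \<forall>q\<in>S. \<not> crosses p q)"

lemma noncrossing_iff: "noncrossing n T \<longleftrightarrow> T \<subseteq> diagonals n \<and> pairwise_noncrossing T"
  by (simp add: noncrossing_def pairwise_noncrossing_def)

lemma pairwise_noncrossing_subset: "pairwise_noncrossing S \<Longrightarrow> X \<subseteq> S \<Longrightarrow> pairwise_noncrossing X"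
  unfolding pairwise_noncrossing_def by blast

lemma pairwise_noncrossingD: "pairwise_noncrossing S \<Longrightarrow> p \<in> S \<Longrightarrow> q \<in> S \<Longrightarrow> \<not> crosses p q"
  unfolding pairwise_noncrossing_def by blast

text \<open>For a triangulation this is the third
  vertex of the triangle resting on (a,b); splitting at k drives both counting inductions.\<close>
definition side_apex :: "(int \<times> int) set \<Rightarrow> int \<Rightarrow> int \<Rightarrow> int \<Rightarrow> bool" where
  "side_apex S a b k \<longleftrightarrow>
     a < k \<and> k < b \<and> (k = a + 1 \<or> (a, k) \<in> S) \<and> (\<forall>j. k < j \<and> j < b \<longrightarrow> (a, j) \<notin> S)"

lemma side_apex_exists:
  assumes "b - a \<ge> 2"
  shows "\<exists>k. side_apex S a b k"
proof -
  define K where "K = {j \<in> {a + 1..b - 1}. j = a + 1 \<or> (a, j) \<in> S}"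
  have "finite K" unfolding K_def by (rule finite_subset[of _ "{a + 1..b - 1}"]) auto
  moreover have "a + 1 \<in> K" using assms unfolding K_def by simp
  ultimately have max_in: "Max K \<in> K" and max_ge: "\<And>j. j \<in> K \<Longrightarrow> j \<le> Max K"
    by (auto intro: Max_in)
  have "side_apex S a b (Max K)"
    unfolding side_apex_def
  proof (intro conjI allI impI)
    show "a < Max K" "Max K < b" "Max K = a + 1 \<or> (a, Max K) \<in> S"
      using max_in unfolding K_def by auto
    show "(a, j) \<notin> S" if "Max K < j \<and> j < b" for j
      using max_ge[of j] max_in that unfolding K_def by auto
  qed
  then show ?thesis ..
qed

lemma split_cover:
  assumes S: "S \<subseteq> tri a b" "pairwise_noncrossing S" and k: "side_apex S a b k"
  shows "S - {(a, b)} \<subseteq> tri a k \<union> tri k b"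
proof
  fix p assume p: "p \<in> S - {(a, b)}"
  obtain c d where p_eq: "p = (c, d)" by fastforce
  have cd: "a \<le> c" "d \<le> b" "d - c \<ge> 2" using p p_eq S(1) by auto
  have False if "c < k" "k < d"
  proof (cases "c = a")
    case True
    then show False using k p p_eq that cd unfolding side_apex_def by fastforce
  next
    case False
    then have "(a, k) \<in> S" using k that cd unfolding side_apex_def by auto
    moreover have "crosses (a, k) (c, d)" using False that cd by simp
    ultimately show False using pairwise_noncrossingD[OF S(2)] p p_eq by blast
  qed
  then show "p \<in> tri a k \<union> tri k b" using p_eq cd by force
qed

lemma card_below_side_le:
  assumes "S \<subseteq> tri a b" "pairwise_noncrossing S" "side_apex S a b k"
  shows "card (S - {(a, b)}) \<le> card (S \<inter> tri a k) + card (S \<inter> tri k b)"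
proof -
  have "S - {(a, b)} \<subseteq> (S \<inter> tri a k) \<union> (S \<inter> tri k b)" using split_cover[OF assms] by blast
  then have "card (S - {(a, b)}) \<le> card ((S \<inter> tri a k) \<union> (S \<inter> tri k b))"
    by (intro card_mono) (simp_all add: finite_tri)
  also have "\<dots> \<le> card (S \<inter> tri a k) + card (S \<inter> tri k b)" by (rule card_Un_le)
  finally show ?thesis .
qed

lemma split_side_compatible:
  assumes S: "pairwise_noncrossing S" "(a, b) \<in> S" and k: "side_apex S a b k" and q: "q \<in> S"
  shows "\<not> crosses (k, b) q"
proof
  assume cr: "crosses (k, b) q"
  obtain c d where q_eq: "q = (c, d)" by fastforce
  have compat: "\<not> crosses p (c, d)" "\<not> crosses (c, d) p" if "p \<in> S" for p
    using pairwise_noncrossingD[OF S(1)] q q_eq that by blast+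
  have k_apex: "a < k" "k < b" "k = a + 1 \<or> (a, k) \<in> S" "\<And>j. k < j \<Longrightarrow> j < b \<Longrightarrow> (a, j) \<notin> S"
    using k unfolding side_apex_def by auto
  from cr q_eq consider (above) "k < c" "c < b" "b < d" | (below) "c < k" "k < d" "d < b"
    by auto
  then show False
  proof cases
    case above
    then show False using compat(1)[OF S(2)] k_apex(1) by simp
  next
    case below
    consider "c < a" | "c = a" | "a < c" by linarith
    then show False
    proof cases
      case 1
      then show False using compat(2)[OF S(2)] below k_apex by simp
    next
      case 2
      then show False using k_apex(4)[of d] below q q_eq by simp
    next
      case 3
      then have "(a, k) \<in> S" using k_apex(3) below by auto
      then show False using compat(1)[of "(a, k)"] 3 below by simp
    qed
  qed
qed

section \<open>Counting chords in a sub-polygon\<close>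

lemma card_noncrossing_le:
  assumes "S \<subseteq> tri a b" "pairwise_noncrossing S" "b - a \<ge> 1"
  shows "int (card S) \<le> b - a - 1"
  using assms
proof (induction "nat (b - a)" arbitrary: a b S rule: less_induct)
  case less
  show ?case
  proof (cases "b - a \<ge> 2")
    case False
    then show ?thesis using less.prems tri_empty by simp
  next
    case True
    then obtain k where k: "side_apex S a b k" using side_apex_exists by blast
    then have bounds: "a < k" "k < b" unfolding side_apex_def by auto
    have pw: "pairwise_noncrossing (S \<inter> tri x y)" for x y
      using less.prems(2) by (rule pairwise_noncrossing_subset) blast
    have "int (card (S \<inter> tri a k)) \<le> k - a - 1"
      by (rule less.hyps[OF _ _ pw]) (use bounds in auto)
    moreover have "int (card (S \<inter> tri k b)) \<le> b - k - 1"
      by (rule less.hyps[OF _ _ pw]) (use bounds in auto)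
    moreover have "card S \<le> card (S - {(a, b)}) + 1"
      using finite_subset[OF less.prems(1) finite_tri] by (rule card_le_card_Diff_singleton)
    ultimately show ?thesis using card_below_side_le[OF less.prems(1,2) k] by linarith
  qed
qed

lemma card_noncrossing_less:
  assumes S: "S \<subseteq> tri a b" "pairwise_noncrossing S" and "b - a \<ge> 2" "(a, b) \<notin> S"
  shows "int (card S) \<le> b - a - 2"
proof -
  obtain k where k: "side_apex S a b k" using side_apex_exists assms(3) by blast
  then have bounds: "a < k" "k < b" unfolding side_apex_def by auto
  have pw: "pairwise_noncrossing (S \<inter> tri x y)" for x y
    using S(2) by (rule pairwise_noncrossing_subset) blast
  have "int (card (S \<inter> tri a k)) \<le> k - a - 1" "int (card (S \<inter> tri k b)) \<le> b - k - 1"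
    by (rule card_noncrossing_le[OF _ pw]; use bounds in simp)+
  moreover have "card S \<le> card (S \<inter> tri a k) + card (S \<inter> tri k b)"
    using card_below_side_le[OF S k] assms(4) by simp
  ultimately show ?thesis by linarith
qed

definition saturated :: "(int \<times> int) set \<Rightarrow> int \<Rightarrow> int \<Rightarrow> bool" where
  "saturated S a b \<longleftrightarrow> (\<forall>p\<in>tri a b. (\<forall>q\<in>S. \<not> crosses p q) \<longrightarrow> p \<in> S)"

lemma saturated_mono: "saturated S a b \<Longrightarrow> tri x y \<subseteq> tri a b \<Longrightarrow> saturated S x y"
  unfolding saturated_def by blast

lemma card_split_at_apex:
  assumes "(a, b) \<in> S" "a < k" "k < b" "b - a \<ge> 2"
  shows "1 + card (S \<inter> tri a k) + card (S \<inter> tri k b) \<le> card (S \<inter> tri a b)"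
proof -
  have disjoint: "(S \<inter> tri a k) \<inter> (S \<inter> tri k b) = {}" by (auto simp: tri_def)
  have "(a, b) \<notin> (S \<inter> tri a k) \<union> (S \<inter> tri k b)" using assms by auto
  then have "card (insert (a, b) ((S \<inter> tri a k) \<union> (S \<inter> tri k b)))
      = 1 + card (S \<inter> tri a k) + card (S \<inter> tri k b)"
    using disjoint by (simp add: finite_tri card_Un_disjoint)
  moreover have "insert (a, b) ((S \<inter> tri a k) \<union> (S \<inter> tri k b)) \<subseteq> S \<inter> tri a b"
    using assms by (auto simp: tri_def)
  then have "card (insert (a, b) ((S \<inter> tri a k) \<union> (S \<inter> tri k b))) \<le> card (S \<inter> tri a b)"
    by (intro card_mono) (simp add: finite_tri)
  ultimately show ?thesis by simp
qed

text \<open>A saturated non-crossing set containing the side (a,b) triangulates the polygon a..b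
  and so has at least b-a-1 chords there.\<close>
lemma card_saturated_ge:
  assumes pw: "pairwise_noncrossing S"
    and "saturated S a b" "b - a \<ge> 1" "b - a \<ge> 2 \<longrightarrow> (a, b) \<in> S"
  shows "b - a - 1 \<le> int (card (S \<inter> tri a b))"
  using assms(2-)
proof (induction "nat (b - a)" arbitrary: a b rule: less_induct)
  case less
  show ?case
  proof (cases "b - a \<ge> 2")
    case False
    then show ?thesis by simp
  next
    case True
    then have ab: "(a, b) \<in> S" using less.prems(3) by simp
    obtain k where k: "side_apex S a b k" using side_apex_exists True by blast
    then have bounds: "a < k" "k < b" and left_side: "k - a \<ge> 2 \<Longrightarrow> (a, k) \<in> S"
      unfolding side_apex_def by auto
    have right_side: "(k, b) \<in> S" if "b - k \<ge> 2"
      using less.prems(1) split_side_compatible[OF pw ab k] that bounds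
      unfolding saturated_def by auto
    have "k - a - 1 \<le> int (card (S \<inter> tri a k))"
      by (rule less.hyps[OF _ saturated_mono[OF less.prems(1)]]) (use bounds left_side in auto)
    moreover have "b - k - 1 \<le> int (card (S \<inter> tri k b))"
      by (rule less.hyps[OF _ saturated_mono[OF less.prems(1)]]) (use bounds right_side in auto)
    ultimately show ?thesis using card_split_at_apex[OF ab bounds True] by linarith
  qed
qed

section \<open>From triangulations to sparse colourings\<close>

lemma triangulation_saturated:
  assumes T: "triangulation n T" and p: "p \<in> diagonals n" "\<forall>q\<in>T. \<not> crosses p q"
  shows "p \<in> T"
proof -
  have nc: "T \<subseteq> diagonals n" "pairwise_noncrossing T"
    using T by (simp_all add: triangulation_def noncrossing_iff)
  have "\<not> crosses u v" if "u \<in> insert p T" "v \<in> insert p T" for u v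
    using that p(2) pairwise_noncrossingD[OF nc(2)] not_crosses_self crosses_commute
    by (metis insert_iff)
  then have "noncrossing n (insert p T)"
    using nc p(1) by (auto simp: noncrossing_iff pairwise_noncrossing_def)
  then have "insert p T = T" using T unfolding triangulation_def by blast
  then show ?thesis by blast
qed

lemma triangulation_colouring_sparse:
  assumes T: "triangulation n T"
  shows "sparse 2 n (T \<inter> tri 2 n)"
  unfolding sparse_def
proof (intro ballI, clarify)
  fix \<alpha> \<beta> assume ab: "(\<alpha>, \<beta>) \<in> tri 2 n"
  have restrict: "T \<inter> tri 2 n \<inter> tri \<alpha> \<beta> = T \<inter> tri \<alpha> \<beta>" using tri_mono[OF ab] by blast
  have pw: "pairwise_noncrossing T" using T by (simp add: triangulation_def noncrossing_iff)
  have pw': "pairwise_noncrossing (T \<inter> tri \<alpha> \<beta>)" using pw by (rule pairwise_noncrossing_subset) blast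
  have len: "\<beta> - \<alpha> \<ge> 2" using ab by simp
  have upper: "int (card (T \<inter> tri \<alpha> \<beta>)) \<le> \<beta> - \<alpha> - 1"
    using card_noncrossing_le[OF _ pw'] len by simp
  have "int (card (T \<inter> tri \<alpha> \<beta>)) = \<beta> - \<alpha> - 1 \<longleftrightarrow> (\<alpha>, \<beta>) \<in> T"
  proof
    assume "int (card (T \<inter> tri \<alpha> \<beta>)) = \<beta> - \<alpha> - 1"
    then show "(\<alpha>, \<beta>) \<in> T" using card_noncrossing_less[OF _ pw' len] by auto
  next
    assume "(\<alpha>, \<beta>) \<in> T"
    moreover have "saturated T \<alpha> \<beta>"
      using triangulation_saturated[OF T] tri_mono[OF ab] tri_subset_diagonals
      unfolding saturated_def by blast
    ultimately show "int (card (T \<inter> tri \<alpha> \<beta>)) = \<beta> - \<alpha> - 1"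
      using card_saturated_ge[OF pw] len upper by fastforce
  qed
  then show "int (card (T \<inter> tri 2 n \<inter> tri \<alpha> \<beta>)) \<le> \<beta> - \<alpha> - 1 \<and>
      (int (card (T \<inter> tri 2 n \<inter> tri \<alpha> \<beta>)) = \<beta> - \<alpha> - 1) = ((\<alpha>, \<beta>) \<in> T \<inter> tri 2 n)"
    using restrict upper ab by auto
qed

text \<open>The diagonals at the distinguished vertex 1 are forced by the remaining ones: (1,y) is
  present iff no diagonal (c,d) of the colouring has c < y < d.\<close>
lemma triangulation_determined_by_colouring:
  assumes T1: "triangulation n T1" and T2: "triangulation n T2"
    and eq: "T1 \<inter> tri 2 n = T2 \<inter> tri 2 n"
  shows "T1 \<subseteq> T2"
proof
  fix p assume pT1: "p \<in> T1"
  obtain x y where p_eq: "p = (x, y)" by fastforce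
  have diag: "T1 \<subseteq> diagonals n" "T2 \<subseteq> diagonals n" "pairwise_noncrossing T1"
    using T1 T2 by (simp_all add: triangulation_def noncrossing_iff)
  then have xy: "1 \<le> x" "y \<le> n" "y - x \<ge> 2" using pT1 p_eq by (auto simp: diagonals_def)
  show "p \<in> T2"
  proof (cases "x \<ge> 2")
    case True
    then have "p \<in> tri 2 n" using p_eq xy by simp
    then show ?thesis using eq pT1 by blast
  next
    case False
    have "\<not> crosses p q" if qT2: "q \<in> T2" for q
    proof
      assume cr: "crosses p q"
      obtain c d where q_eq: "q = (c, d)" by fastforce
      have cd: "1 \<le> c" "d \<le> n" "d - c \<ge> 2" using diag(2) qT2 q_eq by (auto simp: diagonals_def)
      moreover have "x < c" using cr p_eq q_eq False xy cd(1) by auto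
      ultimately have "q \<in> tri 2 n" using q_eq xy by simp
      then have "q \<in> T1" using eq qT2 by blast
      then show False using pairwise_noncrossingD[OF diag(3) pT1] cr by blast
    qed
    then show ?thesis using triangulation_saturated[OF T2] diag(1) pT1 by blast
  qed
qed

section \<open>From sparse colourings to triangulations\<close>

lemma sparseD:
  assumes "sparse \<delta> \<epsilon> B" "(\<alpha>, \<beta>) \<in> tri \<delta> \<epsilon>"
  shows "int (card (B \<inter> tri \<alpha> \<beta>)) \<le> \<beta> - \<alpha> - 1"
    and "int (card (B \<inter> tri \<alpha> \<beta>)) = \<beta> - \<alpha> - 1 \<longleftrightarrow> (\<alpha>, \<beta>) \<in> B"
proof -
  from assms have "case (\<alpha>, \<beta>) of (\<alpha>, \<beta>) \<Rightarrow> int (card (B \<inter> tri \<alpha> \<beta>)) \<le> \<beta> - \<alpha> - 1 \<and>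
      (int (card (B \<inter> tri \<alpha> \<beta>)) = \<beta> - \<alpha> - 1 \<longleftrightarrow> (\<alpha>, \<beta>) \<in> B)"
    unfolding sparse_def by (rule bspec)
  then show "int (card (B \<inter> tri \<alpha> \<beta>)) \<le> \<beta> - \<alpha> - 1"
    and "int (card (B \<inter> tri \<alpha> \<beta>)) = \<beta> - \<alpha> - 1 \<longleftrightarrow> (\<alpha>, \<beta>) \<in> B"
    by simp_all
qed

lemma sparse_card_le:
  assumes "sparse \<delta> \<epsilon> B" "\<delta> \<le> \<alpha>" "\<beta> \<le> \<epsilon>" "\<beta> - \<alpha> \<ge> 1"
  shows "int (card (B \<inter> tri \<alpha> \<beta>)) \<le> \<beta> - \<alpha> - 1"
proof (cases "\<beta> - \<alpha> \<ge> 2")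
  case True
  then show ?thesis using sparseD(1)[OF assms(1)] assms(2,3) by simp
next
  case False
  then show ?thesis using assms(4) by (simp add: tri_empty)
qed

text \<open>Two overlapping black dots a < c < b < d would force (a,d) to be black, and then the
  triangle at (a,d) would contain too many black dots.\<close>
lemma sparse_no_overlap:
  assumes sp: "sparse \<delta> \<epsilon> B" and B: "B \<subseteq> tri \<delta> \<epsilon>"
    and ab: "(a, b) \<in> B" and cd: "(c, d) \<in> B" and order: "a < c" "c < b" "b < d"
  shows False
proof -
  have abt: "(a, b) \<in> tri \<delta> \<epsilon>" and cdt: "(c, d) \<in> tri \<delta> \<epsilon>" using ab cd B by auto
  have adt: "(a, d) \<in> tri \<delta> \<epsilon>" using abt cdt order by simp
  let ?L = "B \<inter> tri a b" and ?R = "B \<inter> tri c d"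
  have L: "int (card ?L) = b - a - 1" and R: "int (card ?R) = d - c - 1"
    using sparseD(2)[OF sp abt] sparseD(2)[OF sp cdt] ab cd by simp_all
  have overlap: "int (card (B \<inter> tri c b)) \<le> b - c - 1"
    by (rule sparse_card_le[OF sp]) (use abt cdt order in auto)
  have "?L \<inter> ?R = B \<inter> tri c b" using order by (auto simp: tri_def)
  then have union: "card (?L \<union> ?R) + card (B \<inter> tri c b) = card ?L + card ?R"
    using card_Un_Int[of ?L ?R] by (simp add: finite_tri)
  have lower: "d - a - 1 \<le> int (card (?L \<union> ?R))" using union L R overlap by linarith
  let ?X = "B \<inter> tri a d"
  have "(a, d) \<notin> ?L \<union> ?R" using order by auto
  moreover have "?L \<union> ?R \<subseteq> ?X" using order by (auto simp: tri_def)
  ultimately have "card (?L \<union> ?R) \<le> card (?X - {(a, d)})"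
    by (intro card_mono) (auto simp: finite_tri)
  then have without_apex: "d - a - 1 \<le> int (card (?X - {(a, d)}))" using lower by linarith
  moreover have "card (?X - {(a, d)}) \<le> card ?X" by (rule card_Diff1_le)
  ultimately have "int (card ?X) = d - a - 1" using sparseD(1)[OF sp adt] by linarith
  then have "(a, d) \<in> ?X" using sparseD(2)[OF sp adt] order by simp
  then have "Suc (card (?X - {(a, d)})) = card ?X" by (intro card_Suc_Diff1) (simp_all add: finite_tri)
  then show False using without_apex sparseD(1)[OF sp adt] by linarith
qed

lemma sparse_pairwise_noncrossing:
  assumes "sparse \<delta> \<epsilon> B" "B \<subseteq> tri \<delta> \<epsilon>"
  shows "pairwise_noncrossing B"
  unfolding pairwise_noncrossing_def
proof (intro ballI notI)
  fix p q assume "p \<in> B" "q \<in> B" "crosses p q"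
  then obtain a b c d where "p = (a, b)" "q = (c, d)"
    and "(a < c \<and> c < b \<and> b < d) \<or> (c < a \<and> a < d \<and> d < b)"
    by (cases p, cases q) auto
  then show False using sparse_no_overlap[OF assms] \<open>p \<in> B\<close> \<open>q \<in> B\<close> by blast
qed

text \<open>A dot lying in the triangle of a black dot and compatible with all black dots is black:
  otherwise adding it would exceed the upper bound in that triangle.\<close>
lemma sparse_compatible_below_black:
  assumes sp: "sparse \<delta> \<epsilon> B" and B: "B \<subseteq> tri \<delta> \<epsilon>"
    and pw: "pairwise_noncrossing (insert p B)" and ab: "(a, b) \<in> B" and p: "p \<in> tri a b"
  shows "p \<in> B"
proof (rule ccontr)
  assume "p \<notin> B"
  then have "card (insert p (B \<inter> tri a b)) = card (B \<inter> tri a b) + 1"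
    by (simp add: finite_tri)
  moreover have "int (card (insert p (B \<inter> tri a b))) \<le> b - a - 1"
    by (rule card_noncrossing_le) (use p ab pw B in \<open>auto intro: pairwise_noncrossing_subset\<close>)
  moreover have "int (card (B \<inter> tri a b)) = b - a - 1"
    using sparseD(2)[OF sp] ab B by blast
  ultimately show False by linarith
qed

text \<open>If every vertex strictly between x and y is straddled by a chord of B inside x..y, then
  (x,y) itself is in B: the longest chord of B at x must reach y.\<close>
lemma straddled_side_in:
  assumes fin: "finite B" and pw: "pairwise_noncrossing B"
    and strad: "\<And>j. x < j \<Longrightarrow> j < y \<Longrightarrow> \<exists>c d. (c, d) \<in> B \<and> x \<le> c \<and> c < j \<and> j < d \<and> d \<le> y"
    and len: "y - x \<ge> 2"
  shows "(x, y) \<in> B"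
proof (rule ccontr)
  assume notin: "(x, y) \<notin> B"
  define D where "D = {d. (x, d) \<in> B \<and> d \<le> y}"
  have "finite D" unfolding D_def by (rule finite_subset[of _ "snd ` B"]) (use fin in force)+
  obtain d0 where d0: "d0 \<in> D" "x + 1 < d0" using strad[of "x + 1"] len unfolding D_def by force
  define k where "k = Max D"
  have "k \<in> D" and k_max: "\<And>d. d \<in> D \<Longrightarrow> d \<le> k"
    using \<open>finite D\<close> d0 by (auto simp: k_def intro: Max_in)
  then have xk: "(x, k) \<in> B" "x < k" "k < y"
    using notin Max_ge[OF \<open>finite D\<close> d0(1)] d0 unfolding D_def k_def by fastforce+
  obtain c d where cd: "(c, d) \<in> B" "x \<le> c" "c < k" "k < d" "d \<le> y" using strad xk by blast
  show False
  proof (cases "c = x")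
    case True
    then show False using k_max[of d] cd unfolding D_def by auto
  next
    case False
    then show False using pairwise_noncrossingD[OF pw xk(1) cd(1)] cd by simp
  qed
qed

definition fan_completion :: "int \<Rightarrow> (int \<times> int) set \<Rightarrow> (int \<times> int) set" where
  "fan_completion n B =
     B \<union> {(1, j) | j. 3 \<le> j \<and> j \<le> n - 1 \<and> (\<forall>(c, d)\<in>B. \<not> (c < j \<and> j < d))}"

lemma fan_completion_colouring:
  "B \<subseteq> tri 2 n \<Longrightarrow> fan_completion n B \<inter> tri 2 n = B"
  unfolding fan_completion_def by auto

lemma fan_completion_noncrossing:
  assumes B: "B \<subseteq> tri 2 n" and pw: "pairwise_noncrossing B"
  shows "noncrossing n (fan_completion n B)"
proof -
  have "fan_completion n B \<subseteq> diagonals n"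
    using B tri_subset_diagonals unfolding fan_completion_def by (auto simp: diagonals_def)
  moreover have "pairwise_noncrossing (fan_completion n B)"
    using pw B unfolding pairwise_noncrossing_def fan_completion_def by fastforce
  ultimately show ?thesis by (simp add: noncrossing_iff)
qed

text \<open>A dot of the colouring triangle compatible with the completion of a sparse colouring is
  black: either it lies under a black dot, or every vertex it spans is straddled by black dots
  (the fan diagonal to such a vertex would cross it).\<close>
lemma compatible_with_completion_black:
  assumes sp: "sparse 2 n B" and B: "B \<subseteq> tri 2 n" and xy: "(x, y) \<in> tri 2 n"
    and compat: "\<And>q. q \<in> fan_completion n B \<Longrightarrow> \<not> crosses (x, y) q \<and> \<not> crosses q (x, y)"
  shows "(x, y) \<in> B"
proof -
  have compat_B: "\<not> crosses (x, y) q" "\<not> crosses q (x, y)" if "q \<in> B" for q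
    using compat that unfolding fan_completion_def by blast+
  have pw: "pairwise_noncrossing (insert (x, y) B)"
    using sparse_pairwise_noncrossing[OF sp B] compat_B not_crosses_self[of "(x, y)"]
    unfolding pairwise_noncrossing_def by blast
  show ?thesis
  proof (cases "\<exists>a b. (a, b) \<in> B \<and> a \<le> x \<and> y \<le> b")
    case True
    then show ?thesis using sparse_compatible_below_black[OF sp B pw] xy by auto
  next
    case uncovered: False
    have "\<exists>c d. (c, d) \<in> B \<and> x \<le> c \<and> c < j \<and> j < d \<and> d \<le> y" if j: "x < j" "j < y" for j
    proof -
      have "(1, j) \<notin> fan_completion n B" using compat[of "(1, j)"] j xy by auto
      then obtain c d where cd: "(c, d) \<in> B" "c < j" "j < d"
        using j xy unfolding fan_completion_def by auto
      have "\<not> (c \<le> x \<and> y \<le> d)" using uncovered cd(1) by blast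
      moreover have "\<not> crosses (x, y) (c, d)" "\<not> crosses (c, d) (x, y)" using compat_B cd(1) by auto
      ultimately have "x \<le> c \<and> d \<le> y" using cd j by auto
      then show ?thesis using cd by blast
    qed
    then show ?thesis
      using straddled_side_in[OF finite_subset[OF B finite_tri] sparse_pairwise_noncrossing[OF sp B]]
        xy by simp
  qed
qed

text \<open>The completion of a sparse colouring is a maximal non-crossing set: a fan diagonal
  compatible with it is in the fan, any other compatible diagonal is black.\<close>
lemma fan_completion_maximal:
  assumes sp: "sparse 2 n B" and B: "B \<subseteq> tri 2 n"
    and S: "noncrossing n S" "fan_completion n B \<subseteq> S"
  shows "S \<subseteq> fan_completion n B"
proof
  fix p assume pS: "p \<in> S"
  obtain x y where p_eq: "p = (x, y)" by fastforce
  have xy: "1 \<le> x" "y \<le> n" "y - x \<ge> 2" "\<not> (x = 1 \<and> y = n)"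
    using S(1) pS p_eq by (auto simp: noncrossing_iff diagonals_def)
  have compat: "\<not> crosses p q \<and> \<not> crosses q p" if "q \<in> fan_completion n B" for q
    using S pS that by (auto simp: noncrossing_iff dest: pairwise_noncrossingD)
  show "p \<in> fan_completion n B"
  proof (cases "x = 1")
    case True
    have "\<not> (c < y \<and> y < d)" if "(c, d) \<in> B" for c d
      using compat[of "(c, d)"] that B True p_eq unfolding fan_completion_def by auto
    then show ?thesis using True xy p_eq unfolding fan_completion_def by auto
  next
    case False
    then have "(x, y) \<in> tri 2 n" using xy by simp
    then have "p \<in> B" using compatible_with_completion_black[OF sp B] compat p_eq by blast
    then show ?thesis unfolding fan_completion_def by blast
  qed
qed

lemma fan_completion_triangulation:
  assumes "sparse 2 n B" "B \<subseteq> tri 2 n"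
  shows "triangulation n (fan_completion n B)"
  unfolding triangulation_def
proof (intro conjI allI impI)
  show "noncrossing n (fan_completion n B)"
    using assms(2) sparse_pairwise_noncrossing[OF assms] by (rule fan_completion_noncrossing)
  fix S assume "noncrossing n S \<and> fan_completion n B \<subseteq> S"
  then show "S = fan_completion n B" using fan_completion_maximal[OF assms, of S] by blast
qed

lemma colouring_inj_on: "inj_on (\<lambda>T. T \<inter> tri 2 n) (triangulations n)"
proof (rule inj_onI)
  fix T1 T2 assume "T1 \<in> triangulations n" "T2 \<in> triangulations n"
    and same: "T1 \<inter> tri 2 n = T2 \<inter> tri 2 n"
  then have T: "triangulation n T1" "triangulation n T2" unfolding triangulations_def by simp_all
  show "T1 = T2"
  proof (rule subset_antisym)
    show "T1 \<subseteq> T2" using T same by (rule triangulation_determined_by_colouring)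
    show "T2 \<subseteq> T1" using T(2,1) same[symmetric] by (rule triangulation_determined_by_colouring)
  qed
qed

lemma colouring_image: "(\<lambda>T. T \<inter> tri 2 n) ` triangulations n = sparse_colourings 2 n"
proof
  show "(\<lambda>T. T \<inter> tri 2 n) ` triangulations n \<subseteq> sparse_colourings 2 n"
  proof (rule image_subsetI)
    fix T assume "T \<in> triangulations n"
    then have "sparse 2 n (T \<inter> tri 2 n)"
      unfolding triangulations_def using triangulation_colouring_sparse by blast
    then show "T \<inter> tri 2 n \<in> sparse_colourings 2 n" unfolding sparse_colourings_def by simp
  qed
  show "sparse_colourings 2 n \<subseteq> (\<lambda>T. T \<inter> tri 2 n) ` triangulations n"
  proof
    fix B assume "B \<in> sparse_colourings 2 n"
    then have B: "sparse 2 n B" "B \<subseteq> tri 2 n" unfolding sparse_colourings_def by simp_all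
    have "B = fan_completion n B \<inter> tri 2 n" using fan_completion_colouring[OF B(2)] by simp
    moreover have "fan_completion n B \<in> triangulations n"
      using fan_completion_triangulation[OF B] unfolding triangulations_def by simp
    ultimately show "B \<in> (\<lambda>T. T \<inter> tri 2 n) ` triangulations n" by (rule image_eqI)
  qed
qed

text \<open>The correspondence holds for every polygon.\<close>
theorem mainTheorem3:
  fixes e :: int
  assumes "e \<ge> 4"
  shows "bij_betw (\<lambda>T. T \<inter> tri 2 (e - 1)) (triangulations (e - 1)) (sparse_colourings 2 (e - 1))"
  unfolding bij_betw_def using colouring_inj_on colouring_image by blast

end
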